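(* Let $k\ge1$ and let $p=(p_1,\dots,p_k)$ be non-principal ultrafilters on $\mathbb N$ with $\{n: n\equiv j \pmod k\}\in p_j$ for each $j$. For a sequence $i=(i_j)_{j\ge1}$ of integers with $i_j\equiv j\pmod k$, put $\alpha_j(i)=\{i_j,i_j+k,\dots,i_{j+k}-k\}$ and $\alpha_\beta(i)=\bigcup_{j\in\beta}\alpha_j(i)$ for $\beta\in\mathscr F_\emptyset$. Let $X$ be a compact metric space and $f:\mathscr F_\emptyset\to X$ an $\mathcal S_k$-sequence. Define $\tilde f_p:\mathscr F_\emptyset\to X$ by $$\tilde f_p(\beta)=\operatorname*{p_1\text{-}lim}_{i_1}\ \operatorname*{p_2\text{-}lim}_{i_2}\cdots\operatorname*{p_k\text{-}lim}_{i_k}\ \operatorname*{p_1\text{-}lim}_{i_{k+1}}\ \operatorname*{p_2\text{-}lim}_{i_{k+2}}\cdots f(\alpha_\beta(i)),$$ where the limit in $i_m$ is taken along $p_{j}$ with $j\in\{1,\dots,k\}$, $j\equiv m\pmod k$, and the iterated limits are over the finitely many indices $i_m$ on which $f(\alpha_\beta(i))$ depends. Then $\tilde f_p$ is an asymptotic $\mathcal S_k$-subsequence of $f$.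
   Context: $\mathscr F$ is the family of finite non-empty subsets of $\mathbb N=\{1,2,\dots\}$, $\mathscr F_\emptyset=\mathscr F\cup\{\emptyset\}$. For $k\ge0$, $\mathcal S_k\subset\mathscr F$ is the family of $\alpha\in\mathscr F$ such that for every $i\in\alpha$, either $i=\max\alpha$ or there is $j\in\alpha$ with $i<j\le i+k$. An $\mathcal S_k$-sequence in $X$ is a map $f:\mathscr F_\emptyset\to X$ (intended to be evaluated on $\mathcal S_k$). Given pairwise disjoint $\alpha_1,\alpha_2,\dots\in\mathscr F$, let $\alpha_\beta=\bigcup_{i\in\beta}\alpha_i$ ($\alpha_\emptyset=\emptyset$). If $l\ge0$ and $\beta\mapsto\alpha_\beta$ maps $\mathcal S_l$ into $\mathcal S_k$, then $\beta\mapsto f(\alpha_\beta)$ ($\beta\in\mathscr F_\emptyset$) is an $\mathcal S_l$-subsequence of the $\mathcal S_k$-sequence $f$. For $X$ compact metric, an asymptotic $\mathcal S_l$-subsequence of $f$ is a map $\mathscr F_\emptyset\to X$ that is the pointwise limit of a sequence of $\mathcal S_l$-subsequences of $f$. For an ultrafilter $q$ on $\mathbb N$ and a map $x:\mathbb N\to X$, $\operatorname{q\text{-}lim}_n x(n)$ is the unique $y\in X$ such that $\{n: x(n)\in V\}\in q$ for every neighbourhood $V$ of $y$. *)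

theory Defs
  imports "HOL-Analysis.Analysis"
begin

text \<open>Natural numbers of the paper: positive elements of nat.
  Fin: non-empty finite subsets of {1,2,...}; Fin0: Fin together with the empty set.\<close>

definition Fin :: "nat set set" where
  "Fin = {a. finite a \<and> a \<noteq> {} \<and> 0 \<notin> a}"

definition Fin0 :: "nat set set" where
  "Fin0 = {a. finite a \<and> 0 \<notin> a}"

definition Sk :: "nat \<Rightarrow> nat set set" where
  "Sk k = {a \<in> Fin. \<forall>i\<in>a. i = Max a \<or> (\<exists>j\<in>a. i < j \<and> j \<le> i + k)}"

definition nat_ultrafilter :: "nat filter \<Rightarrow> bool" where
  "nat_ultrafilter q \<longleftrightarrow> q \<noteq> bot \<and> (\<forall>P. eventually P q \<or> eventually (\<lambda>n. \<not> P n) q)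
      \<and> eventually (\<lambda>n. n \<ge> 1) q"

definition nonprincipal :: "nat filter \<Rightarrow> bool" where
  "nonprincipal q \<longleftrightarrow> (\<forall>m. eventually (\<lambda>n. n \<noteq> m) q)"

definition union_blocks :: "(nat \<Rightarrow> nat set) \<Rightarrow> nat set \<Rightarrow> nat set" where
  "union_blocks a \<beta> = (\<Union>i\<in>\<beta>. a i)"

definition is_subseq :: "nat \<Rightarrow> nat \<Rightarrow> (nat set \<Rightarrow> 'a) \<Rightarrow> (nat set \<Rightarrow> 'a) \<Rightarrow> bool" where
  "is_subseq k l f g \<longleftrightarrow> (\<exists>a::nat \<Rightarrow> nat set.
      (\<forall>i\<ge>1. a i \<in> Fin) \<and>
      (\<forall>i\<ge>1. \<forall>j\<ge>1. i \<noteq> j \<longrightarrow> a i \<inter> a j = {}) \<and>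
      (\<forall>\<beta>\<in>Sk l. union_blocks a \<beta> \<in> Sk k) \<and>
      (\<forall>\<beta>\<in>Fin0. g \<beta> = f (union_blocks a \<beta>)))"

definition is_asymp_subseq :: "nat \<Rightarrow> nat \<Rightarrow> (nat set \<Rightarrow> 'a::topological_space) \<Rightarrow> (nat set \<Rightarrow> 'a) \<Rightarrow> bool" where
  "is_asymp_subseq k l f h \<longleftrightarrow> (\<exists>G::nat \<Rightarrow> nat set \<Rightarrow> 'a.
      (\<forall>n. is_subseq k l f (G n)) \<and>
      (\<forall>\<beta>\<in>Fin0. (\<lambda>n. G n \<beta>) \<longlonglongrightarrow> h \<beta>))"

text \<open>alpha_j(i) = {i_j, i_j + k, ..., i_{j+k} - k}, written as the set of n congruent to j mod k
  with i_j \<le> n < i_{j+k} (equal to the progression since i_j \<equiv> j mod k).\<close>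

definition alpha_i :: "nat \<Rightarrow> (nat \<Rightarrow> nat) \<Rightarrow> nat \<Rightarrow> nat set" where
  "alpha_i k i j = {n. i j \<le> n \<and> n < i (j + k) \<and> n mod k = j mod k}"

definition alpha_beta :: "nat \<Rightarrow> (nat \<Rightarrow> nat) \<Rightarrow> nat set \<Rightarrow> nat set" where
  "alpha_beta k i \<beta> = (\<Union>j\<in>\<beta>. alpha_i k i j)"

definition pidx :: "nat \<Rightarrow> nat \<Rightarrow> nat" where
  "pidx k m = (if m mod k = 0 then k else m mod k)"

fun iter_lim :: "(nat \<Rightarrow> nat filter) \<Rightarrow> nat \<Rightarrow> nat \<Rightarrow> nat \<Rightarrow> ((nat \<Rightarrow> nat) \<Rightarrow> 'a::t2_space)
                   \<Rightarrow> (nat \<Rightarrow> nat) \<Rightarrow> 'a" where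
  "iter_lim p k m 0 g i = g i"
| "iter_lim p k m (Suc r) g i =
     Lim (p (pidx k m)) (\<lambda>n. iter_lim p k (Suc m) r g (i(m := n)))"

text \<open>tilde f_p(beta): iterated limits in i_1, ..., i_N with N = max beta + k, which covers all
  indices on which f(alpha_beta(i)) depends (the initial values of i are irrelevant).\<close>

definition tilde_f :: "(nat \<Rightarrow> nat filter) \<Rightarrow> nat \<Rightarrow> (nat set \<Rightarrow> 'a::t2_space) \<Rightarrow> nat set \<Rightarrow> 'a" where
  "tilde_f p k f \<beta> =
     iter_lim p k 1 (if \<beta> = {} then 0 else Max \<beta> + k) (\<lambda>i. f (alpha_beta k i \<beta>)) (\<lambda>_. 0)"

end

theory Submission
  imports Defs
begin

text \<open>Fix n and choose i_1 < i_2 < ... one at a time, each in its residue class, such that once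
  i_1, ..., i_m are fixed the remaining iterated limits of f(alpha_beta(i)) are still within 1/(n+1)
  of tilde_f(beta) for every beta \<subseteq> {1..n}. This is possible because each limit is the limit along
  an ultrafilter in the compact space X, so each of these finitely many conditions, the residue
  condition and (by non-principality) i_m > i_(m-1) all hold for p-almost every choice of i_m.
  When all indices on which f(alpha_beta(i)) depends are fixed, f(alpha_beta(i)) itself is within
  1/(n+1) of tilde_f(beta). An increasing index sequence with the right residues makes the blocks
  alpha_j(i) disjoint and maps S_k into S_k, so each such choice is an S_k-subsequence of f, and
  these converge to tilde_f pointwise as n grows.\<close>

lemma ultrafilter_compact_tendsto_Lim:
  fixes h :: "'b \<Rightarrow> 'a::t2_space"
  assumes "F \<noteq> bot" and ultra: "\<And>P. eventually P F \<or> eventually (\<lambda>x. \<not> P x) F"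
    and "compact X" and "eventually (\<lambda>x. h x \<in> X) F"
  shows "(h \<longlongrightarrow> Lim F h) F" and "Lim F h \<in> X"
proof -
  have "filtermap h F \<noteq> bot" "eventually (\<lambda>y. y \<in> X) (filtermap h F)"
    using assms by (simp_all add: filtermap_bot_iff eventually_filtermap)
  then obtain L where L: "L \<in> X" "inf (nhds L) (filtermap h F) \<noteq> bot"
    using \<open>compact X\<close> compact_filter by blast
  have "(h \<longlongrightarrow> L) F"
  proof (rule topological_tendstoI)
    fix S assume "open S" "L \<in> S"
    then have near: "eventually (\<lambda>y. y \<in> S) (nhds L)"
      by (rule eventually_nhds_in_open)
    show "eventually (\<lambda>x. h x \<in> S) F"
    proof (rule ccontr)
      assume "\<not> eventually (\<lambda>x. h x \<in> S) F"
      then have "eventually (\<lambda>y. y \<notin> S) (filtermap h F)"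
        using ultra[of "\<lambda>x. h x \<in> S"] by (simp add: eventually_filtermap)
      with near have "eventually (\<lambda>_. False) (inf (nhds L) (filtermap h F))"
        unfolding eventually_inf by blast
      with L(2) show False
        by (simp add: eventually_False)
    qed
  qed
  with \<open>F \<noteq> bot\<close> L(1) show "(h \<longlongrightarrow> Lim F h) F" "Lim F h \<in> X"
    by (simp_all add: tendsto_Lim)
qed

lemma nonprincipal_eventually_greater:
  assumes "nonprincipal q"
  shows "eventually (\<lambda>x. c < x) q"
proof -
  have "eventually (\<lambda>x. \<forall>c'\<in>{..c}. x \<noteq> c') q"
    using assms unfolding nonprincipal_def by (simp add: eventually_ball_finite)
  then show ?thesis
    by (rule eventually_mono) (auto simp: not_less[symmetric])
qed

lemma mod_eq_less_imp_add_le: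
  fixes x y k :: nat
  assumes "x < y" and "x mod k = y mod k"
  shows "x + k \<le> y"
proof -
  have "k dvd y - x"
    using assms mod_eq_dvd_iff_nat[of x y k] by simp
  with \<open>x < y\<close> show ?thesis
    by (auto dest: dvd_imp_le)
qed

lemma Fin_mem_ge_1: "\<beta> \<in> Fin \<Longrightarrow> j \<in> \<beta> \<Longrightarrow> 1 \<le> j"
  by (cases j) (auto simp: Fin_def)

lemma diagonal_of_updates:
  assumes "\<And>m. \<exists>x. S (Suc m) = (S m)(Suc m := x)" and "j \<le> m"
  shows "S m j = S j j"
  using assms(2)
proof (induction m)
  case (Suc m)
  then show ?case
    using assms(1)[of m] by (cases "j = Suc m") auto
qed simp

locale admissible_index =
  fixes k :: nat and i :: "nat \<Rightarrow> nat"
  assumes k_pos: "1 \<le> k" and strict_mono: "strict_mono i"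
    and index_mod: "1 \<le> j \<Longrightarrow> i j mod k = j mod k"
begin

lemma mem_alpha_i: "x \<in> alpha_i k i j \<longleftrightarrow> i j \<le> x \<and> x < i (j + k) \<and> x mod k = j mod k"
  by (simp add: alpha_i_def)

lemma index_mono: "j \<le> j' \<Longrightarrow> i j \<le> i j'"
  using strict_mono by (simp add: strict_mono_less_eq)

lemma index_less: "j < j' \<Longrightarrow> i j < i j'"
  using strict_mono by (rule strict_monoD)

lemma alpha_i_in_Fin:
  assumes "1 \<le> j"
  shows "alpha_i k i j \<in> Fin"
proof -
  have "i j \<in> alpha_i k i j"
    using index_less[of j "j + k"] k_pos index_mod[OF assms] by (simp add: mem_alpha_i)
  moreover have "0 \<notin> alpha_i k i j"
    using index_less[of 0 j] assms by (auto simp: mem_alpha_i)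
  moreover have "alpha_i k i j \<subseteq> {..< i (j + k)}"
    by (auto simp: mem_alpha_i)
  ultimately show ?thesis
    unfolding Fin_def by (auto intro: finite_subset)
qed

lemma alpha_i_add_le:
  assumes "1 \<le> j" and "x \<in> alpha_i k i j"
  shows "x + k \<le> i (j + k)"
  using assms index_mod[of "j + k"] by (intro mod_eq_less_imp_add_le) (auto simp: mem_alpha_i)

lemma alpha_i_disjoint:
  assumes "1 \<le> j" and "1 \<le> j'" and "j \<noteq> j'"
  shows "alpha_i k i j \<inter> alpha_i k i j' = {}"
proof -
  have "alpha_i k i j \<inter> alpha_i k i j' = {}" if "j < j'" for j j'
  proof -
    have "x \<notin> alpha_i k i j'" if x: "x \<in> alpha_i k i j" for x
    proof
      assume "x \<in> alpha_i k i j'"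
      with x have "j + k \<le> j'"
        using \<open>j < j'\<close> by (intro mod_eq_less_imp_add_le) (auto simp: mem_alpha_i)
      with x \<open>x \<in> alpha_i k i j'\<close> show False
        using index_mono[of "j + k" j'] by (auto simp: mem_alpha_i)
    qed
    then show ?thesis by blast
  qed
  with assms show ?thesis
    by (metis Int_commute linorder_neq_iff)
qed

text \<open>The hypothesis x + k = i (j + k) says that x is the last element of the block alpha_i k i j.\<close>
lemma alpha_i_next_block:
  assumes "1 \<le> j'" and "j < j'" and "j' \<le> j + k" and "x + k = i (j + k)"
  shows "\<exists>y\<in>alpha_i k i j'. x < y \<and> y \<le> x + k"
proof -
  define d where "d = x + k - i j'"
  define y where "y = i j' + k * (d div k)"
  have "i j' \<le> x + k"
    using index_mono[OF \<open>j' \<le> j + k\<close>] assms(4) by simp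
  then have d: "i j' + d = x + k"
    by (simp add: d_def)
  have "d = k * (d div k) + d mod k" and "d mod k < k"
    using k_pos by simp_all
  then have "x < y" and "y \<le> x + k"
    using d unfolding y_def by linarith+
  moreover have "y < i (j' + k)"
    using index_less[of "j + k" "j' + k"] \<open>j < j'\<close> \<open>y \<le> x + k\<close> assms(4) by simp
  moreover have "y mod k = j' mod k"
    using index_mod[OF \<open>1 \<le> j'\<close>] by (simp add: y_def)
  ultimately show ?thesis
    by (auto simp: mem_alpha_i y_def)
qed

lemma mem_alpha_beta: "x \<in> alpha_beta k i \<beta> \<longleftrightarrow> (\<exists>j\<in>\<beta>. x \<in> alpha_i k i j)"
  by (simp add: alpha_beta_def)

lemma alpha_beta_in_Fin:
  assumes "\<beta> \<in> Fin"
  shows "alpha_beta k i \<beta> \<in> Fin"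
proof -
  have "\<And>j. j \<in> \<beta> \<Longrightarrow> alpha_i k i j \<in> Fin"
    using assms by (intro alpha_i_in_Fin Fin_mem_ge_1)
  with assms show ?thesis
    unfolding Fin_def alpha_beta_def by auto
qed

lemma alpha_beta_Max_last:
  assumes "\<beta> \<in> Fin" and "x \<in> alpha_i k i (Max \<beta>)" and "x + k = i (Max \<beta> + k)"
  shows "x = Max (alpha_beta k i \<beta>)"
proof (rule Max_eqI[symmetric])
  show "finite (alpha_beta k i \<beta>)"
    using alpha_beta_in_Fin[OF assms(1)] by (simp add: Fin_def)
  have "Max \<beta> \<in> \<beta>"
    using assms(1) by (simp add: Fin_def)
  with assms(2) show "x \<in> alpha_beta k i \<beta>"
    by (auto simp: mem_alpha_beta)
next
  fix z assume "z \<in> alpha_beta k i \<beta>"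
  then obtain j where j: "j \<in> \<beta>" "z \<in> alpha_i k i j"
    by (auto simp: mem_alpha_beta)
  have "j \<le> Max \<beta>"
    using assms(1) j(1) by (simp add: Fin_def)
  then have "z + k \<le> i (Max \<beta> + k)"
    using alpha_i_add_le[OF Fin_mem_ge_1[OF assms(1) j(1)] j(2)] index_mono[of "j + k" "Max \<beta> + k"]
    by simp
  with assms(3) show "z \<le> x"
    by simp
qed

lemma alpha_beta_Sk:
  assumes "\<beta> \<in> Sk k"
  shows "alpha_beta k i \<beta> \<in> Sk k"
proof -
  let ?U = "alpha_beta k i \<beta>"
  have \<beta>: "\<beta> \<in> Fin" and gaps: "\<And>j. j \<in> \<beta> \<Longrightarrow> j = Max \<beta> \<or> (\<exists>j'\<in>\<beta>. j < j' \<and> j' \<le> j + k)"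
    using assms unfolding Sk_def by auto
  have U: "?U \<in> Fin"
    using \<beta> by (rule alpha_beta_in_Fin)
  have "x = Max ?U \<or> (\<exists>y\<in>?U. x < y \<and> y \<le> x + k)" if "x \<in> ?U" for x
  proof -
    obtain j where j: "j \<in> \<beta>" "x \<in> alpha_i k i j"
      using \<open>x \<in> ?U\<close> by (auto simp: mem_alpha_beta)
    have "1 \<le> j"
      using \<beta> j(1) by (rule Fin_mem_ge_1)
    consider "x + k < i (j + k)" | "x + k = i (j + k)"
      using alpha_i_add_le[OF \<open>1 \<le> j\<close> j(2)] by linarith
    then show ?thesis
    proof cases
      case 1
      then have "x + k \<in> alpha_i k i j"
        using j(2) by (auto simp: mem_alpha_i)
      then have "x + k \<in> ?U"
        using j(1) by (auto simp: mem_alpha_beta)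
      moreover have "x < x + k"
        using k_pos by simp
      ultimately show ?thesis
        by blast
    next
      case last: 2
      from gaps[OF j(1)] show ?thesis
      proof
        assume "j = Max \<beta>"
        with \<beta> j(2) last have "x = Max ?U"
          by (intro alpha_beta_Max_last) simp_all
        then show ?thesis ..
      next
        assume "\<exists>j'\<in>\<beta>. j < j' \<and> j' \<le> j + k"
        then obtain j' where "j' \<in> \<beta>" "j < j'" "j' \<le> j + k"
          by blast
        with last obtain y where "y \<in> alpha_i k i j'" "x < y" "y \<le> x + k"
          using alpha_i_next_block[of j' j x] by auto
        moreover have "y \<in> ?U"
          using \<open>j' \<in> \<beta>\<close> \<open>y \<in> alpha_i k i j'\<close> by (auto simp: mem_alpha_beta)
        ultimately show ?thesis
          by blast
      qed
    qed
  qed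
  with U show ?thesis
    unfolding Sk_def by blast
qed

lemma is_subseq_alpha_beta: "is_subseq k k f (\<lambda>\<beta>. f (alpha_beta k i \<beta>))"
  unfolding is_subseq_def
proof (intro exI[of _ "alpha_i k i"] conjI ballI allI impI)
  show "union_blocks (alpha_i k i) \<beta> \<in> Sk k" if "\<beta> \<in> Sk k" for \<beta>
    using alpha_beta_Sk[OF that] by (simp add: union_blocks_def alpha_beta_def)
qed (simp_all add: alpha_i_in_Fin alpha_i_disjoint union_blocks_def alpha_beta_def)

end


lemma alpha_beta_cong:
  assumes "\<And>j. j \<in> \<beta> \<Longrightarrow> i j = i' j \<and> i (j + k) = i' (j + k)"
  shows "alpha_beta k i \<beta> = alpha_beta k i' \<beta>"
  using assms unfolding alpha_beta_def alpha_i_def by auto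

lemma alpha_beta_in_Fin0:
  assumes "finite \<beta>" and "\<And>j. j \<in> \<beta> \<Longrightarrow> 1 \<le> i j"
  shows "alpha_beta k i \<beta> \<in> Fin0"
proof -
  have "alpha_i k i j \<subseteq> {..< i (j + k)}" for j
    by (auto simp: alpha_i_def)
  then have "finite (alpha_beta k i \<beta>)"
    using assms(1) unfolding alpha_beta_def by (blast intro: finite_subset)
  moreover have "0 \<notin> alpha_beta k i \<beta>"
    using assms(2) unfolding alpha_beta_def alpha_i_def by fastforce
  ultimately show ?thesis
    by (simp add: Fin0_def)
qed

lemma pidx_in_range: "1 \<le> k \<Longrightarrow> pidx k m \<in> {1..k}"
  by (auto simp: pidx_def less_imp_le)

lemma pidx_mod: "pidx k m mod k = m mod k"
  by (simp add: pidx_def)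

lemma iter_lim_in_compact:
  fixes X :: "'a::t2_space set"
  assumes "1 \<le> k" and "\<And>j. j \<in> {1..k} \<Longrightarrow> nat_ultrafilter (p j)" and "compact X"
  shows "(\<And>i'. (\<And>j. j \<notin> {m..<m + r} \<Longrightarrow> i' j = i j) \<Longrightarrow> (\<And>j. j \<in> {m..<m + r} \<Longrightarrow> 1 \<le> i' j)
      \<Longrightarrow> g i' \<in> X) \<Longrightarrow> iter_lim p k m r g i \<in> X"
proof (induction r arbitrary: m i)
  case 0
  then show ?case by simp
next
  case (Suc r)
  let ?q = "p (pidx k m)"
  have q: "nat_ultrafilter ?q"
    using assms(2) pidx_in_range[OF assms(1)] by blast
  have "?q \<noteq> bot" and ultra: "\<And>P. eventually P ?q \<or> eventually (\<lambda>x. \<not> P x) ?q"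
    and "eventually (\<lambda>x. 1 \<le> x) ?q"
    using q by (auto simp: nat_ultrafilter_def)
  have "eventually (\<lambda>x. iter_lim p k (Suc m) r g (i(m := x)) \<in> X) ?q"
    using \<open>eventually (\<lambda>x. 1 \<le> x) ?q\<close>
  proof (rule eventually_mono)
    fix x :: nat assume "1 \<le> x"
    show "iter_lim p k (Suc m) r g (i(m := x)) \<in> X"
    proof (rule Suc.IH)
      fix i' assume outside: "\<And>j. j \<notin> {Suc m..<Suc m + r} \<Longrightarrow> i' j = (i(m := x)) j"
        and inside: "\<And>j. j \<in> {Suc m..<Suc m + r} \<Longrightarrow> 1 \<le> i' j"
      have "i' j = i j" if "j \<notin> {m..<m + Suc r}" for j
        using outside[of j] that by auto
      moreover have "1 \<le> i' j" if "j \<in> {m..<m + Suc r}" for j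
        using outside[of m] inside[of j] that \<open>1 \<le> x\<close> by (cases "j = m") auto
      ultimately show "g i' \<in> X"
        by (rule Suc.prems)
    qed
  qed
  then show ?case
    using ultrafilter_compact_tendsto_Lim(2)[OF \<open>?q \<noteq> bot\<close> ultra \<open>compact X\<close>] by simp
qed

definition alpha_depth :: "nat \<Rightarrow> nat set \<Rightarrow> nat" where
  "alpha_depth k \<beta> = (if \<beta> = {} then 0 else Max \<beta> + k)"

definition partial_lim :: "(nat \<Rightarrow> nat filter) \<Rightarrow> nat \<Rightarrow> (nat set \<Rightarrow> 'a::t2_space) \<Rightarrow> nat \<Rightarrow> nat set
    \<Rightarrow> (nat \<Rightarrow> nat) \<Rightarrow> 'a" where
  "partial_lim p k f m \<beta> s = iter_lim p k (Suc m) (alpha_depth k \<beta> - m) (\<lambda>i. f (alpha_beta k i \<beta>)) s"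

lemma alpha_depth_ge: "finite \<beta> \<Longrightarrow> j \<in> \<beta> \<Longrightarrow> j + k \<le> alpha_depth k \<beta>"
  by (auto simp: alpha_depth_def)

lemma tilde_f_eq_partial_lim: "tilde_f p k f \<beta> = partial_lim p k f 0 \<beta> (\<lambda>_. 0)"
  by (simp add: tilde_f_def partial_lim_def alpha_depth_def)

lemma partial_lim_at_depth:
  "alpha_depth k \<beta> \<le> m \<Longrightarrow> partial_lim p k f m \<beta> s = f (alpha_beta k s \<beta>)"
  by (simp add: partial_lim_def)

lemma partial_lim_Suc:
  assumes "m < alpha_depth k \<beta>"
  shows "partial_lim p k f m \<beta> s
    = Lim (p (pidx k (Suc m))) (\<lambda>x. partial_lim p k f (Suc m) \<beta> (s(Suc m := x)))"
proof -
  have "alpha_depth k \<beta> - m = Suc (alpha_depth k \<beta> - Suc m)"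
    using assms by simp
  then show ?thesis
    by (simp add: partial_lim_def)
qed

lemma partial_lim_beyond_depth:
  assumes "finite \<beta>" and "alpha_depth k \<beta> \<le> m"
  shows "partial_lim p k f (Suc m) \<beta> (s(Suc m := x)) = partial_lim p k f m \<beta> s"
proof -
  have "alpha_beta k (s(Suc m := x)) \<beta> = alpha_beta k s \<beta>"
    using alpha_depth_ge[OF assms(1), of _ k] assms(2) by (intro alpha_beta_cong) fastforce
  with assms(2) show ?thesis
    by (simp add: partial_lim_at_depth)
qed


locale ultralimit_setting =
  fixes k :: nat and p :: "nat \<Rightarrow> nat filter" and X :: "'a::metric_space set"
    and f :: "nat set \<Rightarrow> 'a"
  assumes k_pos: "1 \<le> k"
    and ultrafilters: "\<And>j. j \<in> {1..k} \<Longrightarrow> nat_ultrafilter (p j) \<and> nonprincipal (p j)"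
    and residues: "\<And>j. j \<in> {1..k} \<Longrightarrow> eventually (\<lambda>n. n mod k = j mod k) (p j)"
    and compact_X: "compact X"
    and f_in_X: "\<And>\<beta>. \<beta> \<in> Fin0 \<Longrightarrow> f \<beta> \<in> X"
begin

lemma nat_ultrafilter_p: "nat_ultrafilter (p (pidx k m))"
  and nonprincipal_p: "nonprincipal (p (pidx k m))"
  using ultrafilters[OF pidx_in_range[OF k_pos]] by simp_all

lemma partial_lim_in_X:
  assumes "finite \<beta>" and "0 \<notin> \<beta>" and "\<And>j. j \<in> {1..m} \<Longrightarrow> 1 \<le> s j"
  shows "partial_lim p k f m \<beta> s \<in> X"
  unfolding partial_lim_def
proof (rule iter_lim_in_compact[OF k_pos _ compact_X])
  show "nat_ultrafilter (p j)" if "j \<in> {1..k}" for j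
    using ultrafilters that by blast
next
  fix i' assume outside: "\<And>j. j \<notin> {Suc m..<Suc m + (alpha_depth k \<beta> - m)} \<Longrightarrow> i' j = s j"
    and inside: "\<And>j. j \<in> {Suc m..<Suc m + (alpha_depth k \<beta> - m)} \<Longrightarrow> 1 \<le> i' j"
  have "1 \<le> i' j" if "j \<in> \<beta>" for j
  proof (cases "j \<le> m")
    case True
    with that assms(2) show ?thesis
      using outside[of j] assms(3)[of j] by (cases j) auto
  next
    case False
    then show ?thesis
      using inside[of j] alpha_depth_ge[OF assms(1) that, of k] by auto
  qed
  then show "f (alpha_beta k i' \<beta>) \<in> X"
    using assms(1) by (intro f_in_X alpha_beta_in_Fin0)
qed

lemma eventually_partial_lim_near:
  assumes "finite \<beta>" and "0 \<notin> \<beta>" and "\<And>j. j \<in> {1..m} \<Longrightarrow> 1 \<le> s j"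
    and "dist (partial_lim p k f m \<beta> s) t < e"
  shows "eventually (\<lambda>x. dist (partial_lim p k f (Suc m) \<beta> (s(Suc m := x))) t < e)
    (p (pidx k (Suc m)))"
proof (cases "m < alpha_depth k \<beta>")
  case True
  let ?q = "p (pidx k (Suc m))"
  define h where "h x = partial_lim p k f (Suc m) \<beta> (s(Suc m := x))" for x
  have "?q \<noteq> bot" and ultra: "\<And>P. eventually P ?q \<or> eventually (\<lambda>x. \<not> P x) ?q"
    and "eventually (\<lambda>x. 1 \<le> x) ?q"
    using nat_ultrafilter_p by (auto simp: nat_ultrafilter_def)
  have "eventually (\<lambda>x. h x \<in> X) ?q"
    using \<open>eventually (\<lambda>x. 1 \<le> x) ?q\<close>
  proof (rule eventually_mono)
    fix x :: nat assume "1 \<le> x"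
    with assms(3) show "h x \<in> X"
      unfolding h_def by (intro partial_lim_in_X[OF assms(1,2)]) auto
  qed
  then have "(h \<longlongrightarrow> Lim ?q h) ?q"
    by (rule ultrafilter_compact_tendsto_Lim(1)[OF \<open>?q \<noteq> bot\<close> ultra compact_X])
  moreover have "Lim ?q h = partial_lim p k f m \<beta> s"
    unfolding h_def by (rule partial_lim_Suc[OF True, symmetric])
  ultimately have "eventually (\<lambda>x. h x \<in> ball t e) ?q"
    using assms(4) by (intro topological_tendstoD) (auto simp: dist_commute)
  then show ?thesis
    by (simp add: h_def dist_commute)
next
  case False
  with assms(4) show ?thesis
    by (simp add: partial_lim_beyond_depth[OF assms(1)])
qed

lemma partial_lim_extend:
  assumes "\<And>j. j \<in> {1..m} \<Longrightarrow> 1 \<le> s j"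
    and "\<forall>\<beta>\<in>Pow {1..n}. dist (partial_lim p k f m \<beta> s) (tilde_f p k f \<beta>) < e"
  shows "\<exists>x. s m < x \<and> x mod k = Suc m mod k \<and>
    (\<forall>\<beta>\<in>Pow {1..n}. dist (partial_lim p k f (Suc m) \<beta> (s(Suc m := x))) (tilde_f p k f \<beta>) < e)"
proof -
  let ?q = "p (pidx k (Suc m))"
  have "eventually (\<lambda>x. s m < x) ?q"
    using nonprincipal_p by (rule nonprincipal_eventually_greater)
  moreover have "eventually (\<lambda>x. x mod k = Suc m mod k) ?q"
    using residues[OF pidx_in_range[OF k_pos]] by (simp add: pidx_mod)
  moreover have "eventually (\<lambda>x. \<forall>\<beta>\<in>Pow {1..n}.
      dist (partial_lim p k f (Suc m) \<beta> (s(Suc m := x))) (tilde_f p k f \<beta>) < e) ?q"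
    using assms by (intro eventually_ball_finite ballI eventually_partial_lim_near)
      (auto intro: finite_subset)
  ultimately have "eventually (\<lambda>x. s m < x \<and> x mod k = Suc m mod k \<and> (\<forall>\<beta>\<in>Pow {1..n}.
      dist (partial_lim p k f (Suc m) \<beta> (s(Suc m := x))) (tilde_f p k f \<beta>) < e)) ?q"
    by (simp add: eventually_conj_iff)
  moreover have "?q \<noteq> bot"
    using nat_ultrafilter_p by (simp add: nat_ultrafilter_def)
  ultimately show ?thesis
    using eventually_happens' by blast
qed

lemma approximating_index_chain:
  assumes "0 < e"
  shows "\<exists>S. \<forall>m. ((\<forall>j\<in>{1..m}. 1 \<le> S m j) \<and>
    (\<forall>\<beta>\<in>Pow {1..n}. dist (partial_lim p k f m \<beta> (S m)) (tilde_f p k f \<beta>) < e)) \<and>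
    (\<exists>x. S (Suc m) = (S m)(Suc m := x) \<and> S m m < x \<and> x mod k = Suc m mod k)"
proof (rule dependent_nat_choice)
  show "\<exists>s. (\<forall>j\<in>{1..0}. 1 \<le> s j) \<and>
      (\<forall>\<beta>\<in>Pow {1..n}. dist (partial_lim p k f 0 \<beta> s) (tilde_f p k f \<beta>) < e)"
    using assms by (intro exI[of _ "\<lambda>_. 0"]) (simp add: tilde_f_eq_partial_lim)
next
  fix m s
  assume invariant: "(\<forall>j\<in>{1..m}. 1 \<le> s j) \<and>
    (\<forall>\<beta>\<in>Pow {1..n}. dist (partial_lim p k f m \<beta> s) (tilde_f p k f \<beta>) < e)"
  then obtain x where x: "s m < x" "x mod k = Suc m mod k"
    and near: "\<forall>\<beta>\<in>Pow {1..n}. dist (partial_lim p k f (Suc m) \<beta> (s(Suc m := x))) (tilde_f p k f \<beta>) < e"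
    using partial_lim_extend[of m s n e] by auto
  have "1 \<le> (s(Suc m := x)) j" if "j \<in> {1..Suc m}" for j
  proof (cases "j = Suc m")
    case False
    with that invariant show ?thesis
      by simp
  qed (use x(1) in simp)
  with near x show "\<exists>s'. ((\<forall>j\<in>{1..Suc m}. 1 \<le> s' j) \<and>
      (\<forall>\<beta>\<in>Pow {1..n}. dist (partial_lim p k f (Suc m) \<beta> s') (tilde_f p k f \<beta>) < e)) \<and>
      (\<exists>x. s' = s(Suc m := x) \<and> s m < x \<and> x mod k = Suc m mod k)"
    by blast
qed

lemma approximating_admissible_index:
  assumes "0 < e"
  shows "\<exists>i. admissible_index k i \<and>
    (\<forall>\<beta>\<in>Pow {1..n}. dist (f (alpha_beta k i \<beta>)) (tilde_f p k f \<beta>) < e)"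
proof -
  from approximating_index_chain[OF assms] obtain S where chain: "\<forall>m. ((\<forall>j\<in>{1..m}. 1 \<le> S m j) \<and>
    (\<forall>\<beta>\<in>Pow {1..n}. dist (partial_lim p k f m \<beta> (S m)) (tilde_f p k f \<beta>) < e)) \<and>
    (\<exists>x. S (Suc m) = (S m)(Suc m := x) \<and> S m m < x \<and> x mod k = Suc m mod k)" ..
  have near: "\<forall>\<beta>\<in>Pow {1..n}. dist (partial_lim p k f m \<beta> (S m)) (tilde_f p k f \<beta>) < e" for m
    using chain by blast
  have ext: "\<exists>x. S (Suc m) = (S m)(Suc m := x) \<and> S m m < x \<and> x mod k = Suc m mod k" for m
    using chain by blast
  then have "\<exists>x. S (Suc m) = (S m)(Suc m := x)" for m
    by blast
  define i where "i j = S j j" for j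
  have agree: "S m j = i j" if "j \<le> m" for j m
    unfolding i_def by (rule diagonal_of_updates) fact+
  have step: "i m < i (Suc m) \<and> i (Suc m) mod k = Suc m mod k" for m
    using ext[of m] by (auto simp: i_def)
  have "admissible_index k i"
  proof
    show "strict_mono i"
      using step by (simp add: strict_mono_Suc_iff)
    show "i j mod k = j mod k" if "1 \<le> j" for j
      using that step[of "j - 1"] by simp
  qed (rule k_pos)
  moreover have "dist (f (alpha_beta k i \<beta>)) (tilde_f p k f \<beta>) < e" if "\<beta> \<in> Pow {1..n}" for \<beta>
  proof -
    let ?N = "alpha_depth k \<beta>"
    have "finite \<beta>"
      using that by (auto intro: finite_subset)
    then have "j \<le> ?N" and "j + k \<le> ?N" if "j \<in> \<beta>" for j
      using alpha_depth_ge[OF _ that, of k] by simp_all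
    then have "alpha_beta k (S ?N) \<beta> = alpha_beta k i \<beta>"
      by (intro alpha_beta_cong) (simp add: agree)
    moreover have "dist (partial_lim p k f ?N \<beta> (S ?N)) (tilde_f p k f \<beta>) < e"
      using near[of ?N] that by blast
    ultimately show ?thesis
      by (simp add: partial_lim_at_depth)
  qed
  ultimately show ?thesis
    by blast
qed

lemma is_asymp_subseq_tilde_f: "is_asymp_subseq k k f (tilde_f p k f)"
proof -
  let ?good = "\<lambda>n i. admissible_index k i \<and>
    (\<forall>\<beta>\<in>Pow {1..n}. dist (f (alpha_beta k i \<beta>)) (tilde_f p k f \<beta>) < inverse (real (Suc n)))"
  have "\<forall>n. \<exists>i. ?good n i"
    by (intro allI approximating_admissible_index) simp
  then obtain I where I: "\<And>n. ?good n (I n)"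
    by metis
  have "(\<lambda>n. f (alpha_beta k (I n) \<beta>)) \<longlonglongrightarrow> tilde_f p k f \<beta>" if "\<beta> \<in> Fin0" for \<beta>
  proof -
    obtain M where "\<beta> \<subseteq> {..M}" and "0 \<notin> \<beta>"
      using \<open>\<beta> \<in> Fin0\<close> by (auto simp: Fin0_def finite_nat_iff_bounded_le)
    have "\<beta> \<subseteq> {1..M}"
    proof
      fix x assume "x \<in> \<beta>"
      with \<open>\<beta> \<subseteq> {..M}\<close> \<open>0 \<notin> \<beta>\<close> show "x \<in> {1..M}"
        by (cases x) auto
    qed
    then have "dist (f (alpha_beta k (I n) \<beta>)) (tilde_f p k f \<beta>) < inverse (real (Suc n))"
      if "M \<le> n" for n
    proof -
      have "\<beta> \<in> Pow {1..n}"
        using \<open>\<beta> \<subseteq> {1..M}\<close> that by (simp add: subset_iff) (meson order_trans)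
      with I[of n] show ?thesis
        by blast
    qed
    then have "eventually (\<lambda>n. norm (dist (f (alpha_beta k (I n) \<beta>)) (tilde_f p k f \<beta>))
        \<le> inverse (real (Suc n))) sequentially"
      by (intro eventually_sequentiallyI[of M]) (simp add: less_imp_le)
    then show ?thesis
      using LIMSEQ_inverse_real_of_nat by (rule Lim_null_comparison[THEN tendsto_dist_iff[THEN iffD2]])
  qed
  moreover have "is_subseq k k f (\<lambda>\<beta>. f (alpha_beta k (I n) \<beta>))" for n
    using I[of n] admissible_index.is_subseq_alpha_beta by blast
  ultimately show ?thesis
    unfolding is_asymp_subseq_def by (intro exI[of _ "\<lambda>n \<beta>. f (alpha_beta k (I n) \<beta>)"]) simp
qed

end

theorem lemma3p2:
  fixes k :: nat and p :: "nat \<Rightarrow> nat filter"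
    and X :: "'a::metric_space set" and f :: "nat set \<Rightarrow> 'a"
  assumes "k \<ge> 1"
    and "\<And>j. j \<in> {1..k} \<Longrightarrow> nat_ultrafilter (p j) \<and> nonprincipal (p j)"
    and "\<And>j. j \<in> {1..k} \<Longrightarrow> eventually (\<lambda>n. n mod k = j mod k) (p j)"
    and "compact X"
    and "\<And>\<beta>. \<beta> \<in> Fin0 \<Longrightarrow> f \<beta> \<in> X"
  shows "is_asymp_subseq k k f (tilde_f p k f)"
proof -
  interpret ultralimit_setting k p X f
    using assms by unfold_locales
  show ?thesis
    by (rule is_asymp_subseq_tilde_f)
qed

end
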